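(* For $(\alpha,\beta)\in\mathbb{R}^2$, let $\mathfrak{m}_{\alpha,\beta}$ be the $8$-dimensional real Lie algebra with a basis $\{v^1,\dots,v^8\}$ of its dual satisfying $$dv^1=dv^2=dv^3=0,\quad dv^4=v^{13},\quad dv^5=v^{23},\quad dv^6=v^{14}+v^{25}-v^{35},$$ $$dv^7=\alpha v^{12}+v^{15}+v^{24}+v^{34},\quad dv^8=v^{16}-2\beta v^{25}+v^{27}-\beta v^{35}-v^{45},$$ and let $\{v'^1,\dots,v'^8\}$ be the analogous basis of $\mathfrak{m}_{\alpha',\beta'}^*$ (same equations with $(\alpha',\beta')$). Let $f:\mathfrak{m}_{\alpha,\beta}\to\mathfrak{m}_{\alpha',\beta'}$ be a Lie algebra isomorphism and $F:\bigwedge^*\mathfrak{m}_{\alpha',\beta'}^*\to\bigwedge^*\mathfrak{m}_{\alpha,\beta}^*$ the extension of its dual, written $F(v'^i)=\sum_{j=1}^8\lambda^i_j v^j$, so that $\Lambda=(\lambda^i_j)\in GL(8,\mathbb{R})$ and $F(dv'^i)=d(F(v'^i))$ for all $i$. Then $F(v'^i)\wedge v^{123}=0$ for $i=1,2,3$; $F(v'^i)\wedge v^{12345}=0$ for $i=4,5$; and $F(v'^i)\wedge v^{1234567}=0$ for $i=6,7$. In particular $\Lambda$ is block triangular and $$\det(\lambda^i_j)_{i,j=1,2,3}\cdot\det(\lambda^i_j)_{i,j=4,5}\cdot\det(\lambda^i_j)_{i,j=6,7}\cdot\lambda^8_8=\det\Lambda\neq0.$$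
   Context: $v^{ij}=v^i\wedge v^j$, $v^{i_1\cdots i_k}=v^{i_1}\wedge\cdots\wedge v^{i_k}$, and $d$ is the Chevalley–Eilenberg differential. *)

theory Defs
  imports Main "Jordan_Normal_Form.Determinant"
begin

text \<open>Exterior forms on an n-dimensional space with dual basis v^1, v^2, ... are represented
by their coefficient functions on (finite) index sets: a form w is the sum over sets I of
w I times v^I, where v^I = v^{i1...ik} for the increasing enumeration i1 < ... < ik of I.\<close>

type_synonym form = "nat set \<Rightarrow> real"

definition zero_form :: form where "zero_form = (\<lambda>K. 0)"

definition basis :: "nat set \<Rightarrow> form" where
  "basis S = (\<lambda>K. if K = S then 1 else 0)"

text \<open>Sign of the shuffle putting the increasing list of I in front of the one of J.\<close>
definition shuffle_sign :: "nat set \<Rightarrow> nat set \<Rightarrow> real" where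
  "shuffle_sign I J = (-1) ^ card {(i, j). i \<in> I \<and> j \<in> J \<and> j < i}"

text \<open>Wedge product: v^I wedge v^J = sign * v^(I \<union> J) if I, J disjoint, 0 otherwise.\<close>
definition wedge :: "form \<Rightarrow> form \<Rightarrow> form" where
  "wedge w e = (\<lambda>K. \<Sum>I\<in>Pow K. shuffle_sign I (K - I) * w I * e (K - I))"

definition dv :: "real \<Rightarrow> real \<Rightarrow> nat \<Rightarrow> form" where
  "dv \<alpha> \<beta> k = (\<lambda>K.
     if k = 4 then basis {1,3} K
     else if k = 5 then basis {2,3} K
     else if k = 6 then basis {1,4} K + basis {2,5} K - basis {3,5} K
     else if k = 7 then \<alpha> * basis {1,2} K + basis {1,5} K + basis {2,4} K + basis {3,4} K
     else if k = 8 then basis {1,6} K - 2 * \<beta> * basis {2,5} K + basis {2,7} K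
                        - \<beta> * basis {3,5} K - basis {4,5} K
     else 0)"

definition d1 :: "real \<Rightarrow> real \<Rightarrow> form \<Rightarrow> form" where
  "d1 \<alpha> \<beta> w = (\<lambda>K. \<Sum>j\<in>{1..8}. w {j} * dv \<alpha> \<beta> j K)"

text \<open>Entries lambda^i_j (1-based) of the 8x8 matrix Lambda (0-based in JNF).\<close>
definition lam :: "real mat \<Rightarrow> nat \<Rightarrow> nat \<Rightarrow> real" where
  "lam \<Lambda> i j = \<Lambda> $$ (i - 1, j - 1)"

definition Fv :: "real mat \<Rightarrow> nat \<Rightarrow> form" where
  "Fv \<Lambda> i = (\<lambda>K. if \<exists>j\<in>{1..8}. K = {j} then lam \<Lambda> i (the_elem K) else 0)"

definition F2 :: "real mat \<Rightarrow> form \<Rightarrow> form" where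
  "F2 \<Lambda> e = (\<lambda>K. \<Sum>a\<in>{1..8}. \<Sum>b\<in>{a<..8}. e {a, b} * wedge (Fv \<Lambda> a) (Fv \<Lambda> b) K)"

definition blk :: "real mat \<Rightarrow> nat \<Rightarrow> nat \<Rightarrow> real mat" where
  "blk \<Lambda> a b = mat (b + 1 - a) (b + 1 - a) (\<lambda>(i, j). lam \<Lambda> (a + i) (a + j))"

end

theory Submission
  imports Defs
begin

text \<open>Give v^1,...,v^8 the weights 1,1,1,2,2,3,3,4. Every dv^k is a combination of v^ab with
a, b of weight below that of k; conversely the coefficients of v^4,...,v^8 in a 1-form w reappear
in dw as the coefficients of v^13, v^23, v^14, v^15, v^16, each containing an index of weight one
less. By strong induction on the weight of i, F(v'^i) only involves v^j of weight at most that
of i, because dF(v'^i) = F(dv'^i) is built from F(v'^a) wedge F(v'^b) with a, b of smaller weight.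
So Lambda is block lower triangular for the blocks {1,2,3}, {4,5}, {6,7}, {8}.\<close>

definition weight :: "nat \<Rightarrow> nat" where
  "weight j = (if j \<le> 3 then 1 else if j \<le> 5 then 2 else if j \<le> 7 then 3 else 4)"

definition filtration :: "nat \<Rightarrow> nat set" where
  "filtration k = {j \<in> {1..8}. weight j \<le> k}"

definition row_supported :: "real mat \<Rightarrow> nat set \<Rightarrow> nat \<Rightarrow> bool" where
  "row_supported L S i \<longleftrightarrow> (\<forall>j\<in>{1..8}. j \<notin> S \<longrightarrow> lam L i j = 0)"

lemma filtration_mono: "k \<le> l \<Longrightarrow> filtration k \<subseteq> filtration l"
  unfolding filtration_def by auto

lemma row_supported_mono: "row_supported L S i \<Longrightarrow> S \<subseteq> T \<Longrightarrow> row_supported L T i"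
  unfolding row_supported_def by blast

lemma dv_weight_lt:
  assumes nz: "dv \<alpha> \<beta> i K \<noteq> 0" and "a \<in> K"
  shows "weight a < weight i"
proof -
  have "i \<in> {4,5,6,7,8}"
    using nz by (rule contrapos_np) (simp add: dv_def)
  then have "i = 4 \<and> K = {1,3} \<or> i = 5 \<and> K = {2,3}
      \<or> i = 6 \<and> K \<in> {{1,4}, {2,5}, {3,5}}
      \<or> i = 7 \<and> K \<in> {{1,2}, {1,5}, {2,4}, {3,4}}
      \<or> i = 8 \<and> K \<in> {{1,6}, {2,5}, {2,7}, {3,5}, {4,5}}"
    using nz by (elim insertE emptyE) (simp_all add: dv_def basis_def split: if_splits)
  then show ?thesis
    using \<open>a \<in> K\<close> by (elim disjE conjE insertE emptyE) (auto simp: weight_def)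
qed

lemma Fv_nonzero_singleton:
  assumes "Fv L i I \<noteq> 0"
  obtains j where "j \<in> {1..8}" "I = {j}" "Fv L i I = lam L i j"
  using assms unfolding Fv_def by (auto split: if_splits)

lemma wedge_Fv_basis_eq_zero:
  assumes "row_supported L S i"
  shows "wedge (Fv L i) (basis S) = zero_form"
proof
  fix K
  have "shuffle_sign I (K - I) * Fv L i I * basis S (K - I) = 0" for I
  proof (cases "Fv L i I = 0")
    case False
    then obtain j where j: "j \<in> {1..8}" "I = {j}" "Fv L i I = lam L i j"
      by (rule Fv_nonzero_singleton)
    show ?thesis
    proof (cases "K - I = S")
      case True
      then have "j \<notin> S" using j by auto
      then show ?thesis using assms j by (simp add: row_supported_def)
    qed (simp add: basis_def)
  qed simp
  then show "wedge (Fv L i) (basis S) K = zero_form K"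
    unfolding wedge_def zero_form_def by (intro sum.neutral ballI)
qed

lemma wedge_Fv_Fv_eq_zero_outside:
  assumes "row_supported L S a" "row_supported L S b" and "\<not> K \<subseteq> S"
  shows "wedge (Fv L a) (Fv L b) K = 0"
  unfolding wedge_def
proof (rule sum.neutral, rule ballI)
  fix I assume I: "I \<in> Pow K"
  show "shuffle_sign I (K - I) * Fv L a I * Fv L b (K - I) = 0"
  proof (rule ccontr)
    assume "\<not> ?thesis"
    then have na: "Fv L a I \<noteq> 0" and nb: "Fv L b (K - I) \<noteq> 0" by auto
    obtain j where j: "j \<in> {1..8}" "I = {j}" "Fv L a I = lam L a j"
      using na by (rule Fv_nonzero_singleton)
    obtain k where k: "k \<in> {1..8}" "K - I = {k}" "Fv L b (K - I) = lam L b k"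
      using nb by (rule Fv_nonzero_singleton)
    have "j \<in> S"
    proof (rule ccontr)
      assume "j \<notin> S"
      then have "lam L a j = 0" using assms(1) j(1) by (simp add: row_supported_def)
      then show False using na j(3) by simp
    qed
    moreover have "k \<in> S"
    proof (rule ccontr)
      assume "k \<notin> S"
      then have "lam L b k = 0" using assms(2) k(1) by (simp add: row_supported_def)
      then show False using nb k(3) by simp
    qed
    moreover have "K \<subseteq> {j, k}" using j(2) k(2) by blast
    ultimately show False using assms(3) by blast
  qed
qed

lemma F2_eq_zero_outside:
  assumes "\<And>a b. a \<in> {1..8} \<Longrightarrow> b \<in> {1..8} \<Longrightarrow> e {a, b} \<noteq> 0 \<Longrightarrow>
      row_supported L S a \<and> row_supported L S b"
    and "\<not> K \<subseteq> S"
  shows "F2 L e K = 0"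
proof -
  have "e {a, b} * wedge (Fv L a) (Fv L b) K = 0" if "a \<in> {1..8}" "b \<in> {a<..8}" for a b
  proof (cases "e {a, b} = 0")
    case False
    moreover have "b \<in> {1..8}" using that by auto
    ultimately have "row_supported L S a" "row_supported L S b" using assms(1) that(1) by blast+
    then show ?thesis using assms(2) by (simp add: wedge_Fv_Fv_eq_zero_outside)
  qed simp
  then show ?thesis unfolding F2_def by (simp add: sum.neutral)
qed

lemma d1_Fv_coefficients:
  shows "d1 \<alpha> \<beta> (Fv L i) {1,3} = lam L i 4" and "d1 \<alpha> \<beta> (Fv L i) {2,3} = lam L i 5"
    and "d1 \<alpha> \<beta> (Fv L i) {1,4} = lam L i 6" and "d1 \<alpha> \<beta> (Fv L i) {1,5} = lam L i 7"
    and "d1 \<alpha> \<beta> (Fv L i) {1,6} = lam L i 8"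
proof -
  have range: "{1..8::nat} = {1,2,3,4,5,6,7,8}" by auto
  show "d1 \<alpha> \<beta> (Fv L i) {1,3} = lam L i 4" "d1 \<alpha> \<beta> (Fv L i) {2,3} = lam L i 5"
    "d1 \<alpha> \<beta> (Fv L i) {1,4} = lam L i 6" "d1 \<alpha> \<beta> (Fv L i) {1,5} = lam L i 7"
    "d1 \<alpha> \<beta> (Fv L i) {1,6} = lam L i 8"
    unfolding d1_def range
    by (simp_all add: Fv_def) (simp_all add: dv_def basis_def doubleton_eq_iff)
qed

lemma row_supported_of_d1_vanishing:
  assumes "\<And>K. \<not> K \<subseteq> filtration k \<Longrightarrow> d1 \<alpha> \<beta> (Fv L i) K = 0"
  shows "row_supported L (filtration (Suc k)) i"
  unfolding row_supported_def
proof (intro ballI impI)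
  fix j :: nat assume "j \<in> {1..8}" "j \<notin> filtration (Suc k)"
  then have j: "j \<in> {4,5,6,7,8}" and k: "k < weight j - 1"
    by (auto simp: filtration_def weight_def split: if_splits)
  obtain K p where K: "d1 \<alpha> \<beta> (Fv L i) K = lam L i j"
    and p: "p \<in> K" "p \<in> {1..8}" "weight p = weight j - 1"
  proof -
    note coeff = d1_Fv_coefficients[of \<alpha> \<beta> L i]
    from j consider "j = 4" | "j = 5" | "j = 6" | "j = 7" | "j = 8" by blast
    then show thesis
    proof cases
      case 1 show thesis using that[of "{1,3}" 3] coeff(1) by (simp add: 1 weight_def)
    next
      case 2 show thesis using that[of "{2,3}" 3] coeff(2) by (simp add: 2 weight_def)
    next
      case 3 show thesis using that[of "{1,4}" 4] coeff(3) by (simp add: 3 weight_def)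
    next
      case 4 show thesis using that[of "{1,5}" 5] coeff(4) by (simp add: 4 weight_def)
    next
      case 5 show thesis using that[of "{1,6}" 6] coeff(5) by (simp add: 5 weight_def)
    qed
  qed
  have "p \<notin> filtration k" using p k by (simp add: filtration_def)
  then have "\<not> K \<subseteq> filtration k" using p by blast
  then show "lam L i j = 0" using assms K by simp
qed

lemma row_supported_weight:
  assumes hom: "\<forall>i\<in>{1..8}. F2 \<Lambda> (dv \<alpha>' \<beta>' i) = d1 \<alpha> \<beta> (Fv \<Lambda> i)"
    and "i \<in> {1..8}"
  shows "row_supported \<Lambda> (filtration (weight i)) i"
  using assms(2)
proof (induction "weight i" arbitrary: i rule: less_induct)
  case less
  define k where "k = weight i - 1"
  have wi: "weight i = Suc k" unfolding k_def weight_def by simp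
  have lower: "row_supported \<Lambda> (filtration k) a"
    if "a \<in> {1..8}" "weight a < weight i" for a
  proof (rule row_supported_mono)
    show "row_supported \<Lambda> (filtration (weight a)) a" using less.hyps[OF that(2,1)] .
    show "filtration (weight a) \<subseteq> filtration k" using that(2) wi by (simp add: filtration_mono)
  qed
  have pairs: "row_supported \<Lambda> (filtration k) a \<and> row_supported \<Lambda> (filtration k) b"
    if "a \<in> {1..8}" "b \<in> {1..8}" "dv \<alpha>' \<beta>' i {a, b} \<noteq> 0" for a b
    using lower that(1,2) dv_weight_lt[OF that(3)] by simp
  have "d1 \<alpha> \<beta> (Fv \<Lambda> i) K = 0" if "\<not> K \<subseteq> filtration k" for K
  proof -
    have "F2 \<Lambda> (dv \<alpha>' \<beta>' i) K = 0" using pairs that by (rule F2_eq_zero_outside)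
    then show ?thesis using hom less.prems by simp
  qed
  then show ?case
    unfolding wi by (rule row_supported_of_d1_vanishing)
qed

lemma lam_eq_zero_of_weight_lt:
  assumes "\<forall>i\<in>{1..8}. F2 \<Lambda> (dv \<alpha>' \<beta>' i) = d1 \<alpha> \<beta> (Fv \<Lambda> i)"
    and "i \<in> {1..8}" "j \<in> {1..8}" "weight i < weight j"
  shows "lam \<Lambda> i j = 0"
proof -
  have "j \<notin> filtration (weight i)" using assms(4) by (simp add: filtration_def)
  then show ?thesis
    using row_supported_weight[OF assms(1,2)] assms(3) by (simp add: row_supported_def)
qed

definition trailing_mat :: "'a mat \<Rightarrow> nat \<Rightarrow> 'a mat" where
  "trailing_mat A n = mat (dim_row A - n) (dim_row A - n) (\<lambda>(i, j). A $$ (i + n, j + n))"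

lemma det_block_upper_right_zero:
  fixes A :: "'a :: idom mat"
  assumes A: "A \<in> carrier_mat (n + m) (n + m)"
    and zero: "\<And>i j. i < n \<Longrightarrow> n \<le> j \<Longrightarrow> j < n + m \<Longrightarrow> A $$ (i, j) = 0"
  shows "det A = det (mat n n (\<lambda>(i, j). A $$ (i, j))) * det (mat m m (\<lambda>(i, j). A $$ (i + n, j + n)))"
proof -
  obtain A1 A2 A3 A4 where sb: "split_block A n n = (A1, A2, A3, A4)" by (metis prod_cases4)
  have dims: "dim_row A = n + m" "dim_col A = n + m" using A by auto
  note S = split_block[OF sb dims]
  have A1: "A1 = mat n n (\<lambda>(i, j). A $$ (i, j))"
    and A2: "A2 = mat n m (\<lambda>(i, j). A $$ (i, j + n))"
    and A4: "A4 = mat m m (\<lambda>(i, j). A $$ (i + n, j + n))"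
    using sb dims unfolding split_block_def Let_def by (auto simp: case_prod_unfold)
  have "A2 = 0\<^sub>m n m"
    unfolding A2 by (rule eq_matI) (auto simp: zero)
  then have "det (four_block_mat A1 A2 A3 A4) = det A1 * det A4"
    by (rule det_four_block_mat_upper_right_zero[OF S(1) _ S(3) S(4)])
  then show ?thesis unfolding S(5)[symmetric] by (simp only: A1 A4)
qed

text \<open>Matrix indices are 0-based while blk is 1-based, hence the shift n + 1.\<close>

lemma det_trailing_mat_split:
  fixes A :: "real mat"
  assumes A: "A \<in> carrier_mat N N" and "n + m \<le> N"
    and zero: "\<And>i j. n \<le> i \<Longrightarrow> i < n + m \<Longrightarrow> n + m \<le> j \<Longrightarrow> j < N \<Longrightarrow> A $$ (i, j) = 0"
  shows "det (trailing_mat A n) = det (blk A (n + 1) (n + m)) * det (trailing_mat A (n + m))"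
proof -
  have T: "trailing_mat A n \<in> carrier_mat (m + (N - n - m)) (m + (N - n - m))"
    using A assms(2) by (simp add: trailing_mat_def)
  have "det (trailing_mat A n)
      = det (mat m m (\<lambda>(i, j). trailing_mat A n $$ (i, j)))
        * det (mat (N - n - m) (N - n - m) (\<lambda>(i, j). trailing_mat A n $$ (i + m, j + m)))"
    using A assms(2) zero
    by (intro det_block_upper_right_zero[OF T]) (simp add: trailing_mat_def)
  also have "mat m m (\<lambda>(i, j). trailing_mat A n $$ (i, j)) = blk A (n + 1) (n + m)"
    using A assms(2) by (intro eq_matI) (auto simp: trailing_mat_def blk_def lam_def add.commute)
  also have "mat (N - n - m) (N - n - m) (\<lambda>(i, j). trailing_mat A n $$ (i + m, j + m))
      = trailing_mat A (n + m)"
    using A by (intro eq_matI) (auto simp: trailing_mat_def add.assoc add.commute[of m n])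
  finally show ?thesis .
qed

lemma det_weight_block_triangular:
  assumes L: "\<Lambda> \<in> carrier_mat 8 8"
    and tri: "\<And>i j. i \<in> {1..8} \<Longrightarrow> j \<in> {1..8} \<Longrightarrow> weight i < weight j \<Longrightarrow> lam \<Lambda> i j = 0"
  shows "det (blk \<Lambda> 1 3) * det (blk \<Lambda> 4 5) * det (blk \<Lambda> 6 7) * lam \<Lambda> 8 8 = det \<Lambda>"
proof -
  have zero: "\<Lambda> $$ (i, j) = 0" if "j < 8" "weight (Suc i) < weight (Suc j)" for i j
    using tri[of "Suc i" "Suc j"] that by (auto simp: lam_def weight_def split: if_splits)
  have split: "det (trailing_mat \<Lambda> n) = det (blk \<Lambda> (n + 1) (n + m)) * det (trailing_mat \<Lambda> (n + m))"
    if "n + m \<le> 8"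
      and "\<And>i j. n \<le> i \<Longrightarrow> i < n + m \<Longrightarrow> n + m \<le> j \<Longrightarrow> j < 8 \<Longrightarrow> weight (Suc i) < weight (Suc j)"
    for n m
    using that by (intro det_trailing_mat_split[OF L] zero) auto
  have "trailing_mat \<Lambda> 0 = \<Lambda>"
    using L by (intro eq_matI) (auto simp: trailing_mat_def)
  then have "det \<Lambda> = det (trailing_mat \<Lambda> 0)" by simp
  also have "\<dots> = det (blk \<Lambda> 1 3) * det (trailing_mat \<Lambda> 3)"
    by (subst split[of 0 3]) (auto simp: weight_def)
  also have "det (trailing_mat \<Lambda> 3) = det (blk \<Lambda> 4 5) * det (trailing_mat \<Lambda> 5)"
    by (subst split[of 3 2]) (auto simp: weight_def)
  also have "det (trailing_mat \<Lambda> 5) = det (blk \<Lambda> 6 7) * det (trailing_mat \<Lambda> 7)"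
    by (subst split[of 5 2]) (auto simp: weight_def)
  also have "det (trailing_mat \<Lambda> 7) = lam \<Lambda> 8 8"
    using L by (simp add: trailing_mat_def det_single lam_def)
  finally show ?thesis by (simp add: mult.assoc)
qed

theorem lemma3p4:
  fixes \<alpha> \<beta> \<alpha>' \<beta>' :: real and \<Lambda> :: "real mat"
  assumes "\<Lambda> \<in> carrier_mat 8 8"
    and "det \<Lambda> \<noteq> 0"
    and "\<forall>i\<in>{1..8}. F2 \<Lambda> (dv \<alpha>' \<beta>' i) = d1 \<alpha> \<beta> (Fv \<Lambda> i)"
  shows "(\<forall>i\<in>{1,2,3}. wedge (Fv \<Lambda> i) (basis {1,2,3}) = zero_form)
       \<and> (\<forall>i\<in>{4,5}. wedge (Fv \<Lambda> i) (basis {1..5}) = zero_form)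
       \<and> (\<forall>i\<in>{6,7}. wedge (Fv \<Lambda> i) (basis {1..7}) = zero_form)
       \<and> det (blk \<Lambda> 1 3) * det (blk \<Lambda> 4 5) * det (blk \<Lambda> 6 7) * lam \<Lambda> 8 8 = det \<Lambda>
       \<and> det \<Lambda> \<noteq> 0"
proof -
  have w: "wedge (Fv \<Lambda> i) (basis (filtration k)) = zero_form" if "i \<in> {1..8}" "weight i = k" for i k
    using row_supported_weight[OF assms(3) that(1)] that(2) by (simp add: wedge_Fv_basis_eq_zero)
  have filt: "filtration 1 = {1,2,3}" "filtration 2 = {1..5}" "filtration 3 = {1..7}"
    by (auto simp: filtration_def weight_def)
  have "\<forall>i\<in>{1,2,3}. wedge (Fv \<Lambda> i) (basis {1,2,3}) = zero_form"
    using w[of _ 1] filt(1) by (simp add: weight_def)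
  moreover have "\<forall>i\<in>{4,5}. wedge (Fv \<Lambda> i) (basis {1..5}) = zero_form"
    using w[of _ 2] filt(2) by (simp add: weight_def)
  moreover have "\<forall>i\<in>{6,7}. wedge (Fv \<Lambda> i) (basis {1..7}) = zero_form"
    using w[of _ 3] filt(3) by (simp add: weight_def)
  moreover have "det (blk \<Lambda> 1 3) * det (blk \<Lambda> 4 5) * det (blk \<Lambda> 6 7) * lam \<Lambda> 8 8 = det \<Lambda>"
    using assms(1) by (rule det_weight_block_triangular) (rule lam_eq_zero_of_weight_lt[OF assms(3)])
  ultimately show ?thesis using assms(2) by blast
qed

end
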